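(* Let $n\ge 2$, let $\sigma_1,\dots,\sigma_n>0$ and let $\rho_1,\dots,\rho_{n-1}\in(-1,1)$. Let $g$ be the density of the Gaussian random vector in $\mathbb R^n$ with zero mean, variances $\mathrm{Var}(X_i)=\sigma_i^2$, and correlation coefficients $\rho(X_k,X_l)=\rho_k\rho_{k+1}\cdots\rho_{l-1}$ for $k<l$ (this is the unique Markov Gaussian vector with zero mean, variances $\sigma_i^2$ and adjacent correlations $\rho(X_i,X_{i+1})=\rho_i$). Let $X$ be any random vector in $\mathbb R^n$ with a density $f\in L^1(\mathbb R^n)$, finite second moments, $f\ln f\in L^1(\mathbb R^n)$, $\mathrm{Var}(X_i)=\sigma_i^2$ for $i=1,\dots,n$, and $\rho(X_i,X_{i+1})=\rho_i$ for $i=1,\dots,n-1$. Then \[ \mathrm{dent}(f)\le \mathrm{dent}(g), \] with equality if and only if $f$ is a translate of $g$, i.e. $f(x)=g(x-m)$ for some $m\in\mathbb R^n$.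
   Context: For a density $f$ on $\mathbb R^n$ with $f\ln f\in L^1(\mathbb R^n)$, the differential entropy is $\mathrm{dent}(f)=-\int_{\mathbb R^n}f(x)\ln f(x)\,dx$. $\rho(X_i,X_j)$ denotes the correlation coefficient of $X_i$ and $X_j$. A random vector $X=(X_1,\dots,X_n)$ is called Markov if for every $i=2,\dots,n-1$ the random vectors $(X_1,\dots,X_{i-1})$ and $(X_{i+1},\dots,X_n)$ are conditionally independent given $X_i$. *)

theory Defs
  imports "HOL-Analysis.Analysis" "Jordan_Normal_Form.Determinant" "Jordan_Normal_Form.Gauss_Jordan_Elimination"
begin

abbreviation Rn :: "nat \<Rightarrow> (nat \<Rightarrow> real) measure" where
  "Rn n \<equiv> PiM {..<n} (\<lambda>_. lborel)"

definition mean_d :: "nat \<Rightarrow> ((nat \<Rightarrow> real) \<Rightarrow> real) \<Rightarrow> nat \<Rightarrow> real" where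
  "mean_d n f i = (\<integral>x. x i * f x \<partial>Rn n)"

definition cov_d :: "nat \<Rightarrow> ((nat \<Rightarrow> real) \<Rightarrow> real) \<Rightarrow> nat \<Rightarrow> nat \<Rightarrow> real" where
  "cov_d n f i j = (\<integral>x. (x i - mean_d n f i) * (x j - mean_d n f j) * f x \<partial>Rn n)"

definition var_d :: "nat \<Rightarrow> ((nat \<Rightarrow> real) \<Rightarrow> real) \<Rightarrow> nat \<Rightarrow> real" where
  "var_d n f i = cov_d n f i i"

definition corr_d :: "nat \<Rightarrow> ((nat \<Rightarrow> real) \<Rightarrow> real) \<Rightarrow> nat \<Rightarrow> nat \<Rightarrow> real" where
  "corr_d n f i j = cov_d n f i j / sqrt (var_d n f i * var_d n f j)"

definition dent :: "nat \<Rightarrow> ((nat \<Rightarrow> real) \<Rightarrow> real) \<Rightarrow> real" where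
  "dent n f = - (\<integral>x. f x * ln (f x) \<partial>Rn n)"

definition markov_cov :: "nat \<Rightarrow> (nat \<Rightarrow> real) \<Rightarrow> (nat \<Rightarrow> real) \<Rightarrow> real mat" where
  "markov_cov n \<sigma> \<rho> = mat n n (\<lambda>(k, l). \<sigma> k * \<sigma> l * (\<Prod>j\<in>{min k l..<max k l}. \<rho> j))"

definition gauss_dens :: "nat \<Rightarrow> real mat \<Rightarrow> (nat \<Rightarrow> real) \<Rightarrow> real" where
  "gauss_dens n S x =
     exp (- (vec n x \<bullet> (the (mat_inverse S) *\<^sub>v vec n x)) / 2) / sqrt ((2 * pi) ^ n * det S)"

end

theory Submission
  imports Defs "HOL-Probability.Probability"
begin

text \<open>With \<open>a\<^sub>j = \<rho>\<^sub>j \<sigma>\<^sub>j\<^sub>+\<^sub>1 / \<sigma>\<^sub>j\<close>, the innovations \<open>W\<^sub>0 = X\<^sub>0\<close> and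
  \<open>W\<^sub>i = X\<^sub>i - a\<^sub>i\<^sub>-\<^sub>1 X\<^sub>i\<^sub>-\<^sub>1\<close> of the Markov Gaussian vector are independent centred normal variables
  with variances \<open>d\<^sub>0 = \<sigma>\<^sub>0\<^sup>2\<close> and \<open>d\<^sub>i = \<sigma>\<^sub>i\<^sup>2 (1 - \<rho>\<^sub>i\<^sub>-\<^sub>1\<^sup>2)\<close>; algebraically, the covariance matrix
  factorises as \<open>L \<Sigma> L\<^sup>T = diag d\<close> with \<open>L\<close> lower bidiagonal of determinant 1. Hence \<open>g(x - m)\<close> is
  the product of the normal densities of the innovations of \<open>x - m\<close>, and \<open>- ln g(x - m)\<close> is a
  constant plus \<open>\<Sum>\<^sub>i W\<^sub>i(x - m)\<^sup>2 / (2 d\<^sub>i)\<close>. When \<open>m\<close> is the mean of \<open>f\<close>, the second moments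
  \<open>E\<^sub>f W\<^sub>i(X - m)\<^sup>2\<close> only involve the variances and the adjacent covariances, so they equal \<open>d\<^sub>i\<close>
  just as under \<open>g\<close>. Thus the cross entropy of \<open>f\<close> relative to \<open>g(\<cdot> - m)\<close> is \<open>dent g\<close>, and
  Gibbs' inequality gives \<open>dent f \<le> dent g\<close>, with equality iff \<open>f = g(\<cdot> - m)\<close> almost everywhere.\<close>

subsection \<open>Gibbs' inequality\<close>

lemma gibbs_integrand_nonneg:
  fixes t h :: real
  assumes "t \<ge> 0" and "h > 0"
  shows "0 \<le> t * ln t - t * ln h - t + h"
proof (cases "t = 0")
  case False
  then have "t > 0" using assms by simp
  have "ln (h / t) \<le> h / t - 1" using \<open>t > 0\<close> assms by (intro ln_le_minus_one) simp
  then have "0 \<le> t * (h / t - 1 - ln (h / t))" using \<open>t > 0\<close> by simp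
  also have "\<dots> = t * ln t - t * ln h - t + h" using \<open>t > 0\<close> assms by (simp add: ln_div field_simps)
  finally show ?thesis .
qed (use assms in simp)

lemma gibbs_integrand_eq_0D:
  fixes t h :: real
  assumes "t \<ge> 0" and "h > 0" and "t * ln t - t * ln h - t + h = 0"
  shows "t = h"
proof (cases "t = 0")
  case False
  then have "t > 0" using assms by simp
  then have "ln (h / t) = h / t - 1" using assms by (simp add: ln_div field_simps)
  then have "h / t = 1" using \<open>t > 0\<close> assms by (intro ln_eq_minus_one) auto
  then show ?thesis using \<open>t > 0\<close> by simp
qed (use assms in simp)

lemma gibbs_inequality:
  fixes F H :: "'a \<Rightarrow> real"
  assumes F: "AE x in M. F x \<ge> 0" "integrable M F" "integrable M (\<lambda>x. F x * ln (F x))"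
    and H: "\<And>x. H x > 0" "integrable M H" "integrable M (\<lambda>x. F x * ln (H x))"
    and mass: "(\<integral>x. H x \<partial>M) = (\<integral>x. F x \<partial>M)"
  shows "(\<integral>x. F x * ln (H x) \<partial>M) \<le> (\<integral>x. F x * ln (F x) \<partial>M)"
    and "(\<integral>x. F x * ln (H x) \<partial>M) = (\<integral>x. F x * ln (F x) \<partial>M) \<Longrightarrow> AE x in M. F x = H x"
proof -
  define \<psi> where "\<psi> x = F x * ln (F x) - F x * ln (H x) - F x + H x" for x
  have "integrable M \<psi>" unfolding \<psi>_def using F H by auto
  have nonneg: "AE x in M. 0 \<le> \<psi> x"
    using F(1) by eventually_elim (auto simp: \<psi>_def intro: gibbs_integrand_nonneg H(1))
  have I: "(\<integral>x. \<psi> x \<partial>M) = (\<integral>x. F x * ln (F x) \<partial>M) - (\<integral>x. F x * ln (H x) \<partial>M)"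
    unfolding \<psi>_def using F H mass by simp
  show "(\<integral>x. F x * ln (H x) \<partial>M) \<le> (\<integral>x. F x * ln (F x) \<partial>M)"
    using integral_nonneg_AE[OF nonneg] I by simp
  assume "(\<integral>x. F x * ln (H x) \<partial>M) = (\<integral>x. F x * ln (F x) \<partial>M)"
  then have "AE x in M. \<psi> x = 0"
    using I integral_nonneg_eq_0_iff_AE[OF \<open>integrable M \<psi>\<close> nonneg] by simp
  then show "AE x in M. F x = H x"
    using F(1) by eventually_elim (auto simp: \<psi>_def intro: gibbs_integrand_eq_0D[OF _ H(1)])
qed

lemma nn_integral_normal_density:
  "\<sigma> > 0 \<Longrightarrow> (\<integral>\<^sup>+y. ennreal (normal_density \<mu> \<sigma> y) \<partial>lborel) = 1"
  by (subst nn_integral_eq_integral) auto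

lemma nn_integral_normal_density_square:
  assumes "\<sigma> > 0"
  shows "(\<integral>\<^sup>+y. ennreal (normal_density \<mu> \<sigma> y) * ennreal ((y - \<mu>)\<^sup>2) \<partial>lborel) = ennreal (\<sigma>\<^sup>2)"
proof -
  have "(\<integral>\<^sup>+y. ennreal (normal_density \<mu> \<sigma> y) * ennreal ((y - \<mu>)\<^sup>2) \<partial>lborel)
      = ennreal (\<integral>y. normal_density \<mu> \<sigma> y * (y - \<mu>) ^ (2 * 1) \<partial>lborel)"
    using integrable_normal_moment[OF assms, of \<mu> 2]
    by (subst nn_integral_eq_integral[symmetric]) (auto simp: ennreal_mult)
  also have "\<dots> = ennreal (\<sigma>\<^sup>2)"
    using assms by (subst integral_normal_moment_even) (auto simp: power2_eq_square)
  finally show ?thesis .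
qed

lemma normal_density_centered_diff: "normal_density 0 \<sigma> (y - \<mu>) = normal_density \<mu> \<sigma> y"
  by (simp add: normal_density_def)

lemma ln_normal_density_centered:
  "d > 0 \<Longrightarrow> ln (normal_density 0 (sqrt d) t) = - ln (sqrt (2 * pi * d)) - t\<^sup>2 / (2 * d)"
  by (simp add: normal_density_def ln_mult ln_div less_imp_le)

lemma index_mat_mult_mat:
  "i < n \<Longrightarrow> j < n \<Longrightarrow> (mat n n A * mat n n B) $$ (i, j) = (\<Sum>k<n. A (i, k) * B (k, j))"
  by (simp add: scalar_prod_def atLeast0LessThan)

lemma sum_lower_bidiagonal:
  fixes c F :: "nat \<Rightarrow> 'a :: comm_semiring_1"
  assumes "i < n"
  shows "(\<Sum>k<n. (if k = i then 1 else if Suc k = i then c k else 0) * F k)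
           = F i + (if i = 0 then 0 else c (i - 1) * F (i - 1))"
proof -
  have "(\<Sum>k<n. (if k = i then 1 else if Suc k = i then c k else 0) * F k)
      = (\<Sum>k<n. (if k = i then F k else 0) + (if k = i - 1 \<and> i \<noteq> 0 then c k * F k else 0))"
    by (rule sum.cong) auto
  also have "\<dots> = F i + (if i = 0 then 0 else c (i - 1) * F (i - 1))"
    using assms by (cases "i = 0") (auto simp: sum.distrib)
  finally show ?thesis .
qed

lemma prod_list_diag_mat: "prod_list (diag_mat (mat n n f)) = (\<Prod>i<n. f (i, i))"
proof -
  have "prod_list (diag_mat (mat n n f)) = prod_list (map (\<lambda>i. f (i, i)) [0..<n])"
    unfolding diag_mat_def by (intro arg_cong[where f = prod_list] map_cong) auto
  then show ?thesis by (simp add: prod.distinct_set_conv_list[symmetric] atLeast0LessThan)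
qed

lemma det_mat_diag: "det (mat_diag n f) = (\<Prod>i<n. f i)"
proof -
  have "upper_triangular (mat_diag n f)" by (auto simp: upper_triangular_def mat_diag_def)
  then show ?thesis by (simp add: det_upper_triangular[of _ n] mat_diag_def prod_list_diag_mat)
qed

lemma mat_inverse_eqI:
  fixes A B :: "'a :: field mat"
  assumes A: "A \<in> carrier_mat n n" and B: "B \<in> carrier_mat n n" and AB: "A * B = 1\<^sub>m n"
  shows "mat_inverse A = Some B"
proof -
  have "det A \<noteq> 0" using det_mult[OF A B] AB by auto
  then have "A \<in> Units (ring_mat TYPE('a) n undefined)" by (rule det_non_zero_imp_unit[OF A])
  then obtain C where C: "mat_inverse A = Some C" by (metis mat_inverse(1)[OF A] not_None_eq)
  then have CA: "C * A = 1\<^sub>m n" and C_carrier: "C \<in> carrier_mat n n"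
    using mat_inverse(2)[OF A] by auto
  have "C = C * (A * B)" using AB C_carrier by simp
  also have "\<dots> = C * A * B" using A B C_carrier by simp
  also have "\<dots> = B" using B CA by simp
  finally show ?thesis using C by simp
qed

lemma mat_diag_mult_vec:
  fixes f :: "nat \<Rightarrow> 'a :: semiring_0"
  shows "w \<in> carrier_vec n \<Longrightarrow> mat_diag n f *\<^sub>v w = vec n (\<lambda>i. f i * w $ i)"
  by (rule eq_vecI) (auto simp: mat_diag_def scalar_prod_def, subst sum.remove[of _ i], auto)

subsection \<open>Factorisation of the Markov covariance matrix\<close>

definition ar_coeff :: "(nat \<Rightarrow> real) \<Rightarrow> (nat \<Rightarrow> real) \<Rightarrow> nat \<Rightarrow> real" where
  "ar_coeff \<sigma> \<rho> j = \<rho> j * \<sigma> (Suc j) / \<sigma> j"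

definition innov :: "(nat \<Rightarrow> real) \<Rightarrow> (nat \<Rightarrow> real) \<Rightarrow> nat \<Rightarrow> (nat \<Rightarrow> real) \<Rightarrow> real" where
  "innov \<sigma> \<rho> i x = (if i = 0 then x 0 else x i - ar_coeff \<sigma> \<rho> (i - 1) * x (i - 1))"

definition innov_var :: "(nat \<Rightarrow> real) \<Rightarrow> (nat \<Rightarrow> real) \<Rightarrow> nat \<Rightarrow> real" where
  "innov_var \<sigma> \<rho> i = (if i = 0 then (\<sigma> 0)\<^sup>2 else (\<sigma> i)\<^sup>2 * (1 - (\<rho> (i - 1))\<^sup>2))"

lemma innov_var_pos:
  assumes "\<And>i. i < n \<Longrightarrow> \<sigma> i > 0" and "\<And>i. i < n - 1 \<Longrightarrow> \<rho> i \<in> {-1<..<1}" and "i < n"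
  shows "innov_var \<sigma> \<rho> i > 0"
proof (cases i)
  case 0
  then show ?thesis using assms(1)[OF assms(3)] by (simp add: innov_var_def)
next
  case (Suc p)
  have "\<rho> p \<in> {-1<..<1}" using assms(2,3) Suc by auto
  then have "(\<rho> p)\<^sup>2 < 1" by (simp add: abs_square_less_1 abs_less_iff)
  then show ?thesis using assms(1)[OF assms(3)] Suc by (simp add: innov_var_def)
qed

definition innov_mat :: "nat \<Rightarrow> (nat \<Rightarrow> real) \<Rightarrow> (nat \<Rightarrow> real) \<Rightarrow> real mat" where
  "innov_mat n \<sigma> \<rho> =
     mat n n (\<lambda>(i, j). if j = i then 1 else if Suc j = i then - ar_coeff \<sigma> \<rho> j else 0)"

text \<open>The covariance of the innovation \<open>W\<^sub>i\<close> with \<open>X\<^sub>l\<close>.\<close>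

definition innov_cov :: "(nat \<Rightarrow> real) \<Rightarrow> (nat \<Rightarrow> real) \<Rightarrow> nat \<times> nat \<Rightarrow> real" where
  "innov_cov \<sigma> \<rho> = (\<lambda>(i, l). if i \<le> l
     then \<sigma> i * \<sigma> l * (\<Prod>k\<in>{i..<l}. \<rho> k) * (if i = 0 then 1 else 1 - (\<rho> (i - 1))\<^sup>2) else 0)"

lemma innov_mat_mult_markov_cov:
  assumes "\<And>i. i < n \<Longrightarrow> \<sigma> i > 0"
  shows "innov_mat n \<sigma> \<rho> * markov_cov n \<sigma> \<rho> = mat n n (innov_cov \<sigma> \<rho>)"
proof (rule eq_matI)
  fix i l assume "i < dim_row (mat n n (innov_cov \<sigma> \<rho>))" "l < dim_col (mat n n (innov_cov \<sigma> \<rho>))"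
  then have i: "i < n" and l: "l < n" by auto
  define F where "F k = \<sigma> k * \<sigma> l * (\<Prod>j\<in>{min k l..<max k l}. \<rho> j)" for k
  have "(innov_mat n \<sigma> \<rho> * markov_cov n \<sigma> \<rho>) $$ (i, l)
      = (\<Sum>k<n. (if k = i then 1 else if Suc k = i then - ar_coeff \<sigma> \<rho> k else 0) * F k)"
    unfolding innov_mat_def markov_cov_def using i l
    by (subst index_mat_mult_mat) (auto simp: F_def intro!: sum.cong)
  also have "\<dots> = F i + (if i = 0 then 0 else - ar_coeff \<sigma> \<rho> (i - 1) * F (i - 1))"
    by (rule sum_lower_bidiagonal[OF i])
  also have "\<dots> = innov_cov \<sigma> \<rho> (i, l)"
  proof (cases i)
    case 0
    then show ?thesis by (simp add: F_def innov_cov_def)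
  next
    case (Suc p)
    have "\<sigma> p > 0" using assms i Suc by auto
    show ?thesis
    proof (cases "l \<le> p")
      case True
      then have "(\<Prod>j\<in>{l..<Suc p}. \<rho> j) = (\<Prod>j\<in>{l..<p}. \<rho> j) * \<rho> p"
        by (simp add: prod.atLeastLessThan_Suc)
      with True Suc \<open>\<sigma> p > 0\<close> show ?thesis
        by (simp add: F_def innov_cov_def ar_coeff_def min_def max_def field_simps)
    next
      case False
      then have "(\<Prod>j\<in>{p..<l}. \<rho> j) = \<rho> p * (\<Prod>j\<in>{Suc p..<l}. \<rho> j)"
        by (simp add: prod.atLeast_Suc_lessThan)
      with False Suc \<open>\<sigma> p > 0\<close> show ?thesis
        by (simp add: F_def innov_cov_def ar_coeff_def min_def max_def field_simps power2_eq_square)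
    qed
  qed
  finally show "(innov_mat n \<sigma> \<rho> * markov_cov n \<sigma> \<rho>) $$ (i, l) = mat n n (innov_cov \<sigma> \<rho>) $$ (i, l)"
    using i l by simp
qed (auto simp: innov_mat_def markov_cov_def)

lemma innov_cov_mult_transpose_innov_mat:
  assumes "\<And>i. i < n \<Longrightarrow> \<sigma> i > 0"
  shows "mat n n (innov_cov \<sigma> \<rho>) * transpose_mat (innov_mat n \<sigma> \<rho>) = mat_diag n (innov_var \<sigma> \<rho>)"
proof (rule eq_matI)
  fix i j assume "i < dim_row (mat_diag n (innov_var \<sigma> \<rho>))" "j < dim_col (mat_diag n (innov_var \<sigma> \<rho>))"
  then have i: "i < n" and j: "j < n" by (auto simp: mat_diag_def)
  define F where "F k = innov_cov \<sigma> \<rho> (i, k)" for k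
  have LT: "transpose_mat (innov_mat n \<sigma> \<rho>)
      = mat n n (\<lambda>(k, j). if k = j then 1 else if Suc k = j then - ar_coeff \<sigma> \<rho> k else 0)"
    by (rule eq_matI) (auto simp: innov_mat_def)
  have "(mat n n (innov_cov \<sigma> \<rho>) * transpose_mat (innov_mat n \<sigma> \<rho>)) $$ (i, j)
      = (\<Sum>k<n. (if k = j then 1 else if Suc k = j then - ar_coeff \<sigma> \<rho> k else 0) * F k)"
    using i j by (subst LT, subst index_mat_mult_mat) (auto simp: F_def ac_simps intro!: sum.cong)
  also have "\<dots> = F j + (if j = 0 then 0 else - ar_coeff \<sigma> \<rho> (j - 1) * F (j - 1))"
    by (rule sum_lower_bidiagonal[OF j])
  also have "\<dots> = (if i = j then innov_var \<sigma> \<rho> i else 0)"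
  proof (cases j)
    case 0
    then show ?thesis by (simp add: F_def innov_cov_def innov_var_def power2_eq_square)
  next
    case (Suc q)
    have "\<sigma> q > 0" using assms j Suc by auto
    consider "j < i" | "i = j" | "i \<le> q" using Suc by linarith
    then show ?thesis
    proof cases
      case 3
      then have "(\<Prod>k\<in>{i..<Suc q}. \<rho> k) = (\<Prod>k\<in>{i..<q}. \<rho> k) * \<rho> q"
        by (simp add: prod.atLeastLessThan_Suc)
      with 3 Suc \<open>\<sigma> q > 0\<close> show ?thesis
        by (simp add: F_def innov_cov_def ar_coeff_def field_simps)
    qed (use Suc in \<open>auto simp: F_def innov_cov_def innov_var_def power2_eq_square\<close>)
  qed
  finally show "(mat n n (innov_cov \<sigma> \<rho>) * transpose_mat (innov_mat n \<sigma> \<rho>)) $$ (i, j)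
      = mat_diag n (innov_var \<sigma> \<rho>) $$ (i, j)"
    using i j by (simp add: mat_diag_def)
qed (auto simp: mat_diag_def innov_mat_def)

lemma markov_cov_LDL:
  assumes "\<And>i. i < n \<Longrightarrow> \<sigma> i > 0"
  shows "innov_mat n \<sigma> \<rho> * markov_cov n \<sigma> \<rho> * transpose_mat (innov_mat n \<sigma> \<rho>)
           = mat_diag n (innov_var \<sigma> \<rho>)"
  using innov_mat_mult_markov_cov[OF assms] innov_cov_mult_transpose_innov_mat[OF assms] by simp

lemma det_innov_mat: "det (innov_mat n \<sigma> \<rho>) = 1"
  by (subst det_lower_triangular[of n]) (auto simp: innov_mat_def prod_list_diag_mat)

lemma det_markov_cov:
  assumes "\<And>i. i < n \<Longrightarrow> \<sigma> i > 0"
  shows "det (markov_cov n \<sigma> \<rho>) = (\<Prod>i<n. innov_var \<sigma> \<rho> i)"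
proof -
  have L: "innov_mat n \<sigma> \<rho> \<in> carrier_mat n n" and S: "markov_cov n \<sigma> \<rho> \<in> carrier_mat n n"
    by (auto simp: innov_mat_def markov_cov_def)
  have "(\<Prod>i<n. innov_var \<sigma> \<rho> i)
      = det (innov_mat n \<sigma> \<rho> * markov_cov n \<sigma> \<rho> * transpose_mat (innov_mat n \<sigma> \<rho>))"
    by (simp add: markov_cov_LDL[OF assms] det_mat_diag)
  also have "\<dots> = det (markov_cov n \<sigma> \<rho>)"
    using L S by (simp add: det_mult[of _ n] det_transpose det_innov_mat)
  finally show ?thesis ..
qed

lemma markov_cov_inverse:
  assumes "\<And>i. i < n \<Longrightarrow> \<sigma> i > 0" and "\<And>i. i < n \<Longrightarrow> innov_var \<sigma> \<rho> i \<noteq> 0"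
  shows "mat_inverse (markov_cov n \<sigma> \<rho>) = Some (transpose_mat (innov_mat n \<sigma> \<rho>)
           * mat_diag n (\<lambda>i. 1 / innov_var \<sigma> \<rho> i) * innov_mat n \<sigma> \<rho>)"
proof -
  define L where "L = innov_mat n \<sigma> \<rho>"
  define S where "S = markov_cov n \<sigma> \<rho>"
  define D' where "D' = mat_diag n (\<lambda>i. 1 / innov_var \<sigma> \<rho> i)"
  have L: "L \<in> carrier_mat n n" and S: "S \<in> carrier_mat n n" and D': "D' \<in> carrier_mat n n"
    by (auto simp: L_def S_def D'_def innov_mat_def markov_cov_def)
  have "mat_diag n (innov_var \<sigma> \<rho>) * D' = mat_diag n (\<lambda>_. 1)"
    unfolding D'_def mat_diag_diag by (rule eq_matI) (auto simp: mat_diag_def assms(2))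
  then have "L * S * transpose_mat L * D' = 1\<^sub>m n"
    using markov_cov_LDL[OF assms(1)] by (simp add: L_def S_def)
  then have "L * (S * (transpose_mat L * D')) = 1\<^sub>m n"
    using L S D' by (simp add: assoc_mult_mat[of _ n n _ n _ n])
  then have "S * (transpose_mat L * D') * L = 1\<^sub>m n"
    using L S D' by (intro mat_mult_left_right_inverse[OF L]) auto
  then have "S * (transpose_mat L * D' * L) = 1\<^sub>m n"
    using L S D' by (simp add: assoc_mult_mat[of _ n n _ n _ n])
  then show ?thesis
    unfolding L_def[symmetric] S_def[symmetric] D'_def[symmetric] using L S D'
    by (intro mat_inverse_eqI[OF S]) auto
qed

lemma innov_mat_mult_vec: "i < n \<Longrightarrow> (innov_mat n \<sigma> \<rho> *\<^sub>v vec n x) $ i = innov \<sigma> \<rho> i x"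
  using sum_lower_bidiagonal[of i n "\<lambda>k. - ar_coeff \<sigma> \<rho> k" x]
  by (simp add: innov_mat_def innov_def scalar_prod_def atLeast0LessThan)

lemma quadratic_form_markov_cov_inverse:
  assumes "\<And>i. i < n \<Longrightarrow> \<sigma> i > 0" and "\<And>i. i < n \<Longrightarrow> innov_var \<sigma> \<rho> i \<noteq> 0"
  shows "vec n x \<bullet> (the (mat_inverse (markov_cov n \<sigma> \<rho>)) *\<^sub>v vec n x)
           = (\<Sum>i<n. (innov \<sigma> \<rho> i x)\<^sup>2 / innov_var \<sigma> \<rho> i)"
proof -
  define L where "L = innov_mat n \<sigma> \<rho>"
  define D' where "D' = mat_diag n (\<lambda>i. 1 / innov_var \<sigma> \<rho> i)"
  define w where "w = L *\<^sub>v vec n x"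
  have L: "L \<in> carrier_mat n n" by (simp add: L_def innov_mat_def)
  then have LT: "transpose_mat L \<in> carrier_mat n n" and w: "w \<in> carrier_vec n"
    by (simp_all add: w_def)
  have D': "D' \<in> carrier_mat n n" by (simp add: D'_def)
  have "the (mat_inverse (markov_cov n \<sigma> \<rho>)) *\<^sub>v vec n x = (transpose_mat L * D' * L) *\<^sub>v vec n x"
    by (simp add: markov_cov_inverse[OF assms] L_def D'_def)
  also have "\<dots> = transpose_mat L *\<^sub>v (D' *\<^sub>v w)"
    unfolding w_def using L LT D'
    by (simp add: assoc_mult_mat_vec[OF LT mult_carrier_mat[OF D' L]] assoc_mult_mat_vec[OF D' L])
  finally have "vec n x \<bullet> (the (mat_inverse (markov_cov n \<sigma> \<rho>)) *\<^sub>v vec n x)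
      = (transpose_mat L *\<^sub>v (D' *\<^sub>v w)) \<bullet> vec n x"
    using LT D' w by (simp add: comm_scalar_prod[of _ n])
  also have "\<dots> = (D' *\<^sub>v w) \<bullet> w"
    unfolding w_def using L D' by (intro transpose_vec_mult_scalar[OF L]) auto
  also have "\<dots> = (\<Sum>i<n. 1 / innov_var \<sigma> \<rho> i * w $ i * w $ i)"
    using w by (simp add: D'_def mat_diag_mult_vec scalar_prod_def atLeast0LessThan)
  also have "\<dots> = (\<Sum>i<n. (innov \<sigma> \<rho> i x)\<^sup>2 / innov_var \<sigma> \<rho> i)"
    by (intro sum.cong) (simp_all add: w_def L_def innov_mat_mult_vec power2_eq_square)
  finally show ?thesis .
qed

subsection \<open>The Gaussian density as a product of innovation densities\<close>

definition markov_density ::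
    "(nat \<Rightarrow> real) \<Rightarrow> (nat \<Rightarrow> real) \<Rightarrow> nat \<Rightarrow> (nat \<Rightarrow> real) \<Rightarrow> (nat \<Rightarrow> real) \<Rightarrow> real" where
  "markov_density \<sigma> \<rho> k m x =
     (\<Prod>i<k. normal_density 0 (sqrt (innov_var \<sigma> \<rho> i)) (innov \<sigma> \<rho> i (\<lambda>j. x j - m j)))"

lemma real_sqrt_prod: "sqrt (prod f A) = (\<Prod>i\<in>A. sqrt (f i :: real))"
  by (induction A rule: infinite_finite_induct) (auto simp: real_sqrt_mult)

lemma gauss_dens_markov_cov:
  assumes "\<And>i. i < n \<Longrightarrow> \<sigma> i > 0" and "\<And>i. i < n - 1 \<Longrightarrow> \<rho> i \<in> {-1<..<1}"
  shows "gauss_dens n (markov_cov n \<sigma> \<rho>) x = markov_density \<sigma> \<rho> n (\<lambda>_. 0) x"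
proof -
  have d: "\<And>i. i < n \<Longrightarrow> innov_var \<sigma> \<rho> i > 0" using innov_var_pos[OF assms] .
  then have d': "\<And>i. i < n \<Longrightarrow> innov_var \<sigma> \<rho> i \<noteq> 0" by force
  have "markov_density \<sigma> \<rho> n (\<lambda>_. 0) x
      = (\<Prod>i<n. 1 / sqrt (2 * pi * innov_var \<sigma> \<rho> i) * exp (- ((innov \<sigma> \<rho> i x)\<^sup>2 / innov_var \<sigma> \<rho> i) / 2))"
    unfolding markov_density_def normal_density_def using d
    by (intro prod.cong) (auto simp: ac_simps less_imp_le)
  also have "\<dots> = (\<Prod>i<n. 1 / sqrt (2 * pi * innov_var \<sigma> \<rho> i))
      * exp (\<Sum>i<n. - ((innov \<sigma> \<rho> i x)\<^sup>2 / innov_var \<sigma> \<rho> i) / 2)"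
    by (simp only: prod.distrib exp_sum[OF finite_lessThan])
  also have "\<dots> = 1 / sqrt ((2 * pi) ^ n * (\<Prod>i<n. innov_var \<sigma> \<rho> i))
      * exp (- (\<Sum>i<n. (innov \<sigma> \<rho> i x)\<^sup>2 / innov_var \<sigma> \<rho> i) / 2)"
  proof -
    have "(2 * pi) ^ n * (\<Prod>i<n. innov_var \<sigma> \<rho> i) = (\<Prod>i<n. 2 * pi * innov_var \<sigma> \<rho> i)"
      by (simp add: prod.distrib)
    then show ?thesis by (simp add: real_sqrt_prod prod_dividef sum_negf sum_divide_distrib)
  qed
  also have "\<dots> = gauss_dens n (markov_cov n \<sigma> \<rho>) x"
    by (simp add: gauss_dens_def det_markov_cov[OF assms(1)]
        quadratic_form_markov_cov_inverse[OF assms(1) d'])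
  finally show ?thesis ..
qed

lemma measurable_innov:
  assumes "i < k"
  shows "(\<lambda>x. innov \<sigma> \<rho> i (\<lambda>j. x j - m j)) \<in> borel_measurable (Rn k)"
  using assms measurable_component_singleton[of i "{..<k}" "\<lambda>_. lborel"]
    measurable_component_singleton[of "i - 1" "{..<k}" "\<lambda>_. lborel"]
  by (cases "i = 0") (auto simp: innov_def)

lemma borel_measurable_markov_density [measurable]: "markov_density \<sigma> \<rho> k m \<in> borel_measurable (Rn k)"
  unfolding markov_density_def
  by (intro borel_measurable_prod measurable_compose[OF measurable_innov borel_measurable_normal_density])
    auto

lemma markov_density_nonneg: "markov_density \<sigma> \<rho> k m x \<ge> 0"
  unfolding markov_density_def by (intro prod_nonneg) auto

lemma markov_density_pos:
  assumes "\<And>i. i < k \<Longrightarrow> innov_var \<sigma> \<rho> i > 0"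
  shows "markov_density \<sigma> \<rho> k m x > 0"
  unfolding markov_density_def using assms by (intro prod_pos) (auto intro!: normal_density_pos)

lemma innov_fun_upd: "i < k \<Longrightarrow> innov \<sigma> \<rho> i (\<lambda>j. (x(k := y)) j - m j) = innov \<sigma> \<rho> i (\<lambda>j. x j - m j)"
  unfolding innov_def by auto

lemma innov_fun_upd_self:
  "innov \<sigma> \<rho> k (\<lambda>j. (x(k := y)) j - m j)
     = y - (m k + (if k = 0 then 0 else ar_coeff \<sigma> \<rho> (k - 1) * (x (k - 1) - m (k - 1))))"
  unfolding innov_def by auto

lemma nn_integral_markov_density_Suc:
  assumes h: "h \<in> borel_measurable (Rn (Suc k))"
  shows "(\<integral>\<^sup>+x. ennreal (markov_density \<sigma> \<rho> (Suc k) m x) * h x \<partial>Rn (Suc k))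
    = (\<integral>\<^sup>+x. ennreal (markov_density \<sigma> \<rho> k m x) *
         (\<integral>\<^sup>+y. ennreal (normal_density 0 (sqrt (innov_var \<sigma> \<rho> k)) (innov \<sigma> \<rho> k (\<lambda>j. (x(k := y)) j - m j)))
                * h (x(k := y)) \<partial>lborel) \<partial>Rn k)"
proof -
  interpret product_sigma_finite "\<lambda>_::nat. lborel :: real measure"
    by (simp add: product_sigma_finite_def lborel.sigma_finite_measure_axioms)
  have factor: "markov_density \<sigma> \<rho> (Suc k) m (x(k := y)) = markov_density \<sigma> \<rho> k m x *
      normal_density 0 (sqrt (innov_var \<sigma> \<rho> k)) (innov \<sigma> \<rho> k (\<lambda>j. (x(k := y)) j - m j))" for x y
  proof -
    have "(\<Prod>i<k. normal_density 0 (sqrt (innov_var \<sigma> \<rho> i)) (innov \<sigma> \<rho> i (\<lambda>j. (x(k := y)) j - m j)))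
        = markov_density \<sigma> \<rho> k m x"
      unfolding markov_density_def by (intro prod.cong) (simp_all add: innov_fun_upd del: fun_upd_apply)
    then show ?thesis by (simp only: markov_density_def[of _ _ "Suc k"] prod.lessThan_Suc)
  qed
  have "{..<Suc k} = insert k {..<k}" by auto
  moreover have "(\<lambda>x. ennreal (markov_density \<sigma> \<rho> (Suc k) m x) * h x) \<in> borel_measurable (Rn (Suc k))"
    using h borel_measurable_markov_density by measurable
  ultimately have "(\<integral>\<^sup>+x. ennreal (markov_density \<sigma> \<rho> (Suc k) m x) * h x \<partial>Rn (Suc k))
      = (\<integral>\<^sup>+x. (\<integral>\<^sup>+y. ennreal (markov_density \<sigma> \<rho> (Suc k) m (x(k := y))) * h (x(k := y)) \<partial>lborel) \<partial>Rn k)"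
    by (simp add: product_nn_integral_insert)
  also have "\<dots> = (\<integral>\<^sup>+x. ennreal (markov_density \<sigma> \<rho> k m x) *
         (\<integral>\<^sup>+y. ennreal (normal_density 0 (sqrt (innov_var \<sigma> \<rho> k)) (innov \<sigma> \<rho> k (\<lambda>j. (x(k := y)) j - m j)))
                * h (x(k := y)) \<partial>lborel) \<partial>Rn k)"
  proof (rule nn_integral_cong)
    fix x assume x: "x \<in> space (Rn k)"
    have "(\<lambda>y. x(k := y)) \<in> lborel \<rightarrow>\<^sub>M Rn (Suc k)"
      using measurable_component_update[OF x, of k] by (simp add: lessThan_Suc)
    then have "(\<lambda>y. ennreal (normal_density 0 (sqrt (innov_var \<sigma> \<rho> k)) (innov \<sigma> \<rho> k (\<lambda>j. (x(k := y)) j - m j)))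
        * h (x(k := y))) \<in> borel_measurable lborel"
      using h measurable_innov[of k "Suc k" \<sigma> \<rho> m] by measurable
    then show "(\<integral>\<^sup>+y. ennreal (markov_density \<sigma> \<rho> (Suc k) m (x(k := y))) * h (x(k := y)) \<partial>lborel)
      = ennreal (markov_density \<sigma> \<rho> k m x) *
         (\<integral>\<^sup>+y. ennreal (normal_density 0 (sqrt (innov_var \<sigma> \<rho> k)) (innov \<sigma> \<rho> k (\<lambda>j. (x(k := y)) j - m j)))
                * h (x(k := y)) \<partial>lborel)"
      by (simp add: factor ennreal_mult markov_density_nonneg mult.assoc nn_integral_cmult del: fun_upd_apply)
  qed
  finally show ?thesis .
qed

lemma nn_integral_markov_density_Suc_invariant:
  assumes d: "innov_var \<sigma> \<rho> k > 0"
    and h: "h \<in> borel_measurable (Rn (Suc k))" "\<And>x y. h (x(k := y)) = h x"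
  shows "(\<integral>\<^sup>+x. ennreal (markov_density \<sigma> \<rho> (Suc k) m x) * h x \<partial>Rn (Suc k))
           = (\<integral>\<^sup>+x. ennreal (markov_density \<sigma> \<rho> k m x) * h x \<partial>Rn k)"
proof -
  have "(\<integral>\<^sup>+y. ennreal (normal_density 0 (sqrt (innov_var \<sigma> \<rho> k)) (innov \<sigma> \<rho> k (\<lambda>j. (x(k := y)) j - m j)))
          * h (x(k := y)) \<partial>lborel) = h x" for x
  proof -
    let ?c = "m k + (if k = 0 then 0 else ar_coeff \<sigma> \<rho> (k - 1) * (x (k - 1) - m (k - 1)))"
    have "(\<integral>\<^sup>+y. ennreal (normal_density 0 (sqrt (innov_var \<sigma> \<rho> k)) (innov \<sigma> \<rho> k (\<lambda>j. (x(k := y)) j - m j)))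
          * h (x(k := y)) \<partial>lborel)
        = (\<integral>\<^sup>+y. h x * ennreal (normal_density ?c (sqrt (innov_var \<sigma> \<rho> k)) y) \<partial>lborel)"
      by (intro nn_integral_cong) (simp add: innov_fun_upd_self normal_density_centered_diff h(2) mult.commute del: fun_upd_apply)
    also have "\<dots> = h x"
      using d by (simp add: nn_integral_cmult nn_integral_normal_density)
    finally show ?thesis .
  qed
  then show ?thesis unfolding nn_integral_markov_density_Suc[OF h(1)] by simp
qed

lemma nn_integral_markov_density_Suc_innov_square:
  assumes d: "innov_var \<sigma> \<rho> k > 0"
  shows "(\<integral>\<^sup>+x. ennreal (markov_density \<sigma> \<rho> (Suc k) m x) * ennreal ((innov \<sigma> \<rho> k (\<lambda>j. x j - m j))\<^sup>2) \<partial>Rn (Suc k))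
           = (\<integral>\<^sup>+x. ennreal (markov_density \<sigma> \<rho> k m x) \<partial>Rn k) * ennreal (innov_var \<sigma> \<rho> k)"
proof -
  have meas: "(\<lambda>x. ennreal ((innov \<sigma> \<rho> k (\<lambda>j. x j - m j))\<^sup>2)) \<in> borel_measurable (Rn (Suc k))"
    using measurable_innov[of k "Suc k" \<sigma> \<rho> m] by measurable
  have inner: "(\<integral>\<^sup>+y. ennreal (normal_density 0 (sqrt (innov_var \<sigma> \<rho> k)) (innov \<sigma> \<rho> k (\<lambda>j. (x(k := y)) j - m j)))
          * ennreal ((innov \<sigma> \<rho> k (\<lambda>j. (x(k := y)) j - m j))\<^sup>2) \<partial>lborel) = ennreal (innov_var \<sigma> \<rho> k)" for x
  proof -
    let ?c = "m k + (if k = 0 then 0 else ar_coeff \<sigma> \<rho> (k - 1) * (x (k - 1) - m (k - 1)))"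
    have "(\<integral>\<^sup>+y. ennreal (normal_density 0 (sqrt (innov_var \<sigma> \<rho> k)) (innov \<sigma> \<rho> k (\<lambda>j. (x(k := y)) j - m j)))
          * ennreal ((innov \<sigma> \<rho> k (\<lambda>j. (x(k := y)) j - m j))\<^sup>2) \<partial>lborel)
        = (\<integral>\<^sup>+y. ennreal (normal_density ?c (sqrt (innov_var \<sigma> \<rho> k)) y) * ennreal ((y - ?c)\<^sup>2) \<partial>lborel)"
      by (intro nn_integral_cong) (simp add: innov_fun_upd_self normal_density_centered_diff del: fun_upd_apply)
    also have "\<dots> = ennreal (innov_var \<sigma> \<rho> k)"
      using d by (simp add: nn_integral_normal_density_square)
    finally show ?thesis .
  qed
  show ?thesis
    unfolding nn_integral_markov_density_Suc[OF meas] inner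
    by (simp add: nn_integral_multc)
qed

lemma nn_integral_markov_density:
  assumes "\<And>i. i < k \<Longrightarrow> innov_var \<sigma> \<rho> i > 0"
  shows "(\<integral>\<^sup>+x. ennreal (markov_density \<sigma> \<rho> k m x) \<partial>Rn k) = 1"
  using assms
proof (induction k)
  case 0
  then show ?case by (simp add: PiM_empty markov_density_def)
next
  case (Suc k)
  then show ?case
    using nn_integral_markov_density_Suc_invariant[of \<sigma> \<rho> k "\<lambda>_. 1" m] by simp
qed

lemma nn_integral_markov_density_innov_square:
  assumes "\<And>i. i < k \<Longrightarrow> innov_var \<sigma> \<rho> i > 0" and "i < k"
  shows "(\<integral>\<^sup>+x. ennreal (markov_density \<sigma> \<rho> k m x) * ennreal ((innov \<sigma> \<rho> i (\<lambda>j. x j - m j))\<^sup>2) \<partial>Rn k)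
           = ennreal (innov_var \<sigma> \<rho> i)"
proof -
  have "Suc i \<le> k" using assms(2) by simp
  then show ?thesis using assms(1)
  proof (induction k rule: dec_induct)
    case base
    show ?case using assms(2) base.prems
      by (simp add: nn_integral_markov_density_Suc_innov_square nn_integral_markov_density)
  next
    case (step k)
    have "i < Suc k" using step.hyps by simp
    then have meas: "(\<lambda>x. ennreal ((innov \<sigma> \<rho> i (\<lambda>j. x j - m j))\<^sup>2)) \<in> borel_measurable (Rn (Suc k))"
      using measurable_innov by measurable
    show ?case
      by (subst nn_integral_markov_density_Suc_invariant)
        (use step meas in \<open>auto simp: innov_fun_upd simp del: fun_upd_apply\<close>)
  qed
qed

lemma
  assumes "\<And>i. i < k \<Longrightarrow> innov_var \<sigma> \<rho> i > 0"
  shows integrable_markov_density: "integrable (Rn k) (markov_density \<sigma> \<rho> k m)"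
    and integral_markov_density: "(\<integral>x. markov_density \<sigma> \<rho> k m x \<partial>Rn k) = 1"
  using nn_integral_eq_integrable[of "markov_density \<sigma> \<rho> k m" "Rn k" 1]
    nn_integral_markov_density[OF assms] borel_measurable_markov_density markov_density_nonneg
  by auto

lemma
  assumes "\<And>i. i < k \<Longrightarrow> innov_var \<sigma> \<rho> i > 0" and "i < k"
  shows integrable_markov_density_innov_square:
      "integrable (Rn k) (\<lambda>x. markov_density \<sigma> \<rho> k m x * (innov \<sigma> \<rho> i (\<lambda>j. x j - m j))\<^sup>2)"
    and integral_markov_density_innov_square:
      "(\<integral>x. markov_density \<sigma> \<rho> k m x * (innov \<sigma> \<rho> i (\<lambda>j. x j - m j))\<^sup>2 \<partial>Rn k) = innov_var \<sigma> \<rho> i"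
proof -
  have meas: "(\<lambda>x. markov_density \<sigma> \<rho> k m x * (innov \<sigma> \<rho> i (\<lambda>j. x j - m j))\<^sup>2) \<in> borel_measurable (Rn k)"
    using measurable_innov[OF assms(2)] by measurable
  have "(\<integral>\<^sup>+x. ennreal (markov_density \<sigma> \<rho> k m x * (innov \<sigma> \<rho> i (\<lambda>j. x j - m j))\<^sup>2) \<partial>Rn k)
      = ennreal (innov_var \<sigma> \<rho> i)"
    using nn_integral_markov_density_innov_square[OF assms] by (simp add: ennreal_mult markov_density_nonneg)
  then have "integrable (Rn k) (\<lambda>x. markov_density \<sigma> \<rho> k m x * (innov \<sigma> \<rho> i (\<lambda>j. x j - m j))\<^sup>2)
      \<and> (\<integral>x. markov_density \<sigma> \<rho> k m x * (innov \<sigma> \<rho> i (\<lambda>j. x j - m j))\<^sup>2 \<partial>Rn k) = innov_var \<sigma> \<rho> i"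
    by (subst (asm) nn_integral_eq_integrable[OF meas])
      (use assms markov_density_nonneg in \<open>auto intro: less_imp_le\<close>)
  then show "integrable (Rn k) (\<lambda>x. markov_density \<sigma> \<rho> k m x * (innov \<sigma> \<rho> i (\<lambda>j. x j - m j))\<^sup>2)"
    and "(\<integral>x. markov_density \<sigma> \<rho> k m x * (innov \<sigma> \<rho> i (\<lambda>j. x j - m j))\<^sup>2 \<partial>Rn k) = innov_var \<sigma> \<rho> i"
    by auto
qed

subsection \<open>Entropy of the Markov Gaussian density\<close>

lemma ln_markov_density:
  assumes "\<And>i. i < k \<Longrightarrow> innov_var \<sigma> \<rho> i > 0"
  shows "ln (markov_density \<sigma> \<rho> k m x) = (\<Sum>i<k. - ln (sqrt (2 * pi * innov_var \<sigma> \<rho> i))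
           - (innov \<sigma> \<rho> i (\<lambda>j. x j - m j))\<^sup>2 / (2 * innov_var \<sigma> \<rho> i))"
proof -
  have "ln (markov_density \<sigma> \<rho> k m x)
      = (\<Sum>i<k. ln (normal_density 0 (sqrt (innov_var \<sigma> \<rho> i)) (innov \<sigma> \<rho> i (\<lambda>j. x j - m j))))"
    unfolding markov_density_def using assms
    by (intro ln_prod) (auto intro!: normal_density_pos[THEN order.strict_implies_not_eq, THEN not_sym])
  then show ?thesis using assms by (simp add: ln_normal_density_centered)
qed

lemma cross_entropy_markov_density:
  fixes F :: "(nat \<Rightarrow> real) \<Rightarrow> real"
  assumes d: "\<And>i. i < n \<Longrightarrow> innov_var \<sigma> \<rho> i > 0"
    and F: "integrable (Rn n) F" "(\<integral>x. F x \<partial>Rn n) = 1"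
    and W: "\<And>i. i < n \<Longrightarrow> integrable (Rn n) (\<lambda>x. F x * (innov \<sigma> \<rho> i (\<lambda>j. x j - m j))\<^sup>2)"
      "\<And>i. i < n \<Longrightarrow> (\<integral>x. F x * (innov \<sigma> \<rho> i (\<lambda>j. x j - m j))\<^sup>2 \<partial>Rn n) = innov_var \<sigma> \<rho> i"
  shows "integrable (Rn n) (\<lambda>x. F x * ln (markov_density \<sigma> \<rho> n m x))"
    and "- (\<integral>x. F x * ln (markov_density \<sigma> \<rho> n m x) \<partial>Rn n)
           = (\<Sum>i<n. 1 / 2 + ln (sqrt (2 * pi * innov_var \<sigma> \<rho> i)))"
proof -
  have expand: "F x * ln (markov_density \<sigma> \<rho> n m x)
      = (\<Sum>i<n. - ln (sqrt (2 * pi * innov_var \<sigma> \<rho> i)) * F x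
          - 1 / (2 * innov_var \<sigma> \<rho> i) * (F x * (innov \<sigma> \<rho> i (\<lambda>j. x j - m j))\<^sup>2))" for x
  proof -
    have "F x * ln (markov_density \<sigma> \<rho> n m x) = (\<Sum>i<n. F x * (- ln (sqrt (2 * pi * innov_var \<sigma> \<rho> i))
        - (innov \<sigma> \<rho> i (\<lambda>j. x j - m j))\<^sup>2 / (2 * innov_var \<sigma> \<rho> i)))"
      by (simp add: ln_markov_density[OF d] sum_distrib_left)
    then show ?thesis by (simp add: algebra_simps)
  qed
  show "integrable (Rn n) (\<lambda>x. F x * ln (markov_density \<sigma> \<rho> n m x))"
    unfolding expand using F W by (intro Bochner_Integration.integrable_sum) auto
  have "(\<integral>x. F x * ln (markov_density \<sigma> \<rho> n m x) \<partial>Rn n)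
      = (\<Sum>i<n. - ln (sqrt (2 * pi * innov_var \<sigma> \<rho> i)) - 1 / (2 * innov_var \<sigma> \<rho> i) * innov_var \<sigma> \<rho> i)"
    unfolding expand using F W by (subst Bochner_Integration.integral_sum) (auto intro!: sum.cong)
  also have "\<dots> = - (\<Sum>i<n. 1 / 2 + ln (sqrt (2 * pi * innov_var \<sigma> \<rho> i)))"
  proof -
    have "- ln (sqrt (2 * pi * innov_var \<sigma> \<rho> i)) - 1 / (2 * innov_var \<sigma> \<rho> i) * innov_var \<sigma> \<rho> i
        = - (1 / 2 + ln (sqrt (2 * pi * innov_var \<sigma> \<rho> i)))" if "i < n" for i
      using d[OF that] by simp
    then show ?thesis unfolding sum_negf[symmetric] by (intro sum.cong) auto
  qed
  finally show "- (\<integral>x. F x * ln (markov_density \<sigma> \<rho> n m x) \<partial>Rn n)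
      = (\<Sum>i<n. 1 / 2 + ln (sqrt (2 * pi * innov_var \<sigma> \<rho> i)))"
    by simp
qed

lemma dent_markov_density:
  assumes "\<And>i. i < n \<Longrightarrow> innov_var \<sigma> \<rho> i > 0"
  shows "dent n (markov_density \<sigma> \<rho> n m) = (\<Sum>i<n. 1 / 2 + ln (sqrt (2 * pi * innov_var \<sigma> \<rho> i)))"
  unfolding dent_def
  by (rule cross_entropy_markov_density(2)[OF assms integrable_markov_density integral_markov_density
        integrable_markov_density_innov_square integral_markov_density_innov_square])
    (use assms in auto)

lemma dent_cong_AE:
  assumes "f \<in> borel_measurable (Rn n)" "g \<in> borel_measurable (Rn n)" "AE x in Rn n. f x = g x"
  shows "dent n f = dent n g"
  unfolding dent_def using assms by (intro arg_cong[where f = uminus] integral_cong_AE) auto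

subsection \<open>Second moments of the innovations\<close>

lemma integrable_mult_of_square_integrable:
  fixes u v f :: "'a \<Rightarrow> real"
  assumes "AE x in M. 0 \<le> f x" and "(\<lambda>x. u x * v x * f x) \<in> borel_measurable M"
    and "integrable M (\<lambda>x. (u x)\<^sup>2 * f x)" and "integrable M (\<lambda>x. (v x)\<^sup>2 * f x)"
  shows "integrable M (\<lambda>x. u x * v x * f x)"
proof (rule Bochner_Integration.integrable_bound)
  show "integrable M (\<lambda>x. (u x)\<^sup>2 * f x + (v x)\<^sup>2 * f x)" using assms(3,4) by auto
  show "AE x in M. norm (u x * v x * f x) \<le> norm ((u x)\<^sup>2 * f x + (v x)\<^sup>2 * f x)"
    using assms(1)
  proof eventually_elim
    case (elim x)
    have "2 * \<bar>u x * v x\<bar> \<le> (u x)\<^sup>2 + (v x)\<^sup>2"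
      using sum_squares_bound[of "\<bar>u x\<bar>" "\<bar>v x\<bar>"] by (simp add: abs_mult mult.assoc)
    then have "\<bar>u x * v x\<bar> \<le> (u x)\<^sup>2 + (v x)\<^sup>2" using abs_ge_zero[of "u x * v x"] by linarith
    then have "\<bar>u x * v x\<bar> * f x \<le> ((u x)\<^sup>2 + (v x)\<^sup>2) * f x"
      using elim by (intro mult_right_mono) auto
    then show ?case using elim by (simp add: abs_mult algebra_simps)
  qed
qed (use assms(2) in simp)

lemma integrable_centered_cross_moment:
  fixes f :: "(nat \<Rightarrow> real) \<Rightarrow> real"
  assumes f: "AE x in Rn n. f x \<ge> 0" "integrable (Rn n) f"
    and sm: "\<And>i. i < n \<Longrightarrow> integrable (Rn n) (\<lambda>x. (x i)\<^sup>2 * f x)"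
    and "i < n" and "j < n"
  shows "integrable (Rn n) (\<lambda>x. (x i - a) * (x j - b) * f x)"
proof -
  have [measurable]: "f \<in> borel_measurable (Rn n)" using f(2) by simp
  have coord [measurable]: "(\<lambda>x. x k) \<in> borel_measurable (Rn n)" if "k < n" for k
    using measurable_component_singleton[of k "{..<n}" "\<lambda>_. lborel"] that by simp
  have first: "integrable (Rn n) (\<lambda>x. x k * 1 * f x)" if "k < n" for k
    using that f sm by (intro integrable_mult_of_square_integrable) auto
  have sq: "integrable (Rn n) (\<lambda>x. (x k - c)\<^sup>2 * f x)" if "k < n" for k c
  proof -
    have "(\<lambda>x. (x k - c)\<^sup>2 * f x) = (\<lambda>x. (x k)\<^sup>2 * f x - 2 * c * (x k * 1 * f x) + c\<^sup>2 * f x)"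
      by (rule ext) (simp add: power2_eq_square algebra_simps)
    then show ?thesis using sm[OF that] first[OF that] f(2) by auto
  qed
  show ?thesis using assms(4,5) f(1) sq by (intro integrable_mult_of_square_integrable) auto
qed

lemma cov_d_Suc:
  assumes sp: "\<And>i. i < n \<Longrightarrow> \<sigma> i > 0"
    and var: "\<And>i. i < n \<Longrightarrow> var_d n f i = (\<sigma> i)\<^sup>2"
    and corr: "corr_d n f p (Suc p) = \<rho> p" and p: "Suc p < n"
  shows "cov_d n f p (Suc p) = \<rho> p * \<sigma> p * \<sigma> (Suc p)"
proof -
  have "sqrt (var_d n f p * var_d n f (Suc p)) = \<sigma> p * \<sigma> (Suc p)"
    using p sp[of p] sp[of "Suc p"] by (simp add: var real_sqrt_mult)
  then show ?thesis using corr p sp[of p] sp[of "Suc p"] by (simp add: corr_d_def field_simps)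
qed

lemma innov_second_moment:
  fixes f :: "(nat \<Rightarrow> real) \<Rightarrow> real"
  assumes f: "AE x in Rn n. f x \<ge> 0" "integrable (Rn n) f"
    and sm: "\<And>i. i < n \<Longrightarrow> integrable (Rn n) (\<lambda>x. (x i)\<^sup>2 * f x)"
    and sp: "\<And>i. i < n \<Longrightarrow> \<sigma> i > 0"
    and var: "\<And>i. i < n \<Longrightarrow> var_d n f i = (\<sigma> i)\<^sup>2"
    and corr: "\<And>i. i < n - 1 \<Longrightarrow> corr_d n f i (Suc i) = \<rho> i"
    and i: "i < n"
  shows "integrable (Rn n) (\<lambda>x. f x * (innov \<sigma> \<rho> i (\<lambda>j. x j - mean_d n f j))\<^sup>2)"
    and "(\<integral>x. f x * (innov \<sigma> \<rho> i (\<lambda>j. x j - mean_d n f j))\<^sup>2 \<partial>Rn n) = innov_var \<sigma> \<rho> i"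
proof -
  define U where "U k x = x k - mean_d n f k" for k x
  have int: "integrable (Rn n) (\<lambda>x. U k x * U l x * f x)" if "k < n" "l < n" for k l
    unfolding U_def using f sm that by (rule integrable_centered_cross_moment)
  have cov: "(\<integral>x. U k x * U l x * f x \<partial>Rn n) = cov_d n f k l" for k l
    unfolding U_def cov_d_def ..
  have "integrable (Rn n) (\<lambda>x. f x * (innov \<sigma> \<rho> i (\<lambda>j. x j - mean_d n f j))\<^sup>2)
      \<and> (\<integral>x. f x * (innov \<sigma> \<rho> i (\<lambda>j. x j - mean_d n f j))\<^sup>2 \<partial>Rn n) = innov_var \<sigma> \<rho> i"
  proof (cases i)
    case 0
    have "(\<lambda>x. f x * (innov \<sigma> \<rho> i (\<lambda>j. x j - mean_d n f j))\<^sup>2) = (\<lambda>x. U 0 x * U 0 x * f x)"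
      using 0 by (auto simp: innov_def U_def power2_eq_square)
    then show ?thesis using int[of 0 0] cov[of 0 0] var[of 0] i 0
      by (simp add: var_d_def innov_var_def)
  next
    case (Suc p)
    define a where "a = ar_coeff \<sigma> \<rho> p"
    have p: "p < n" "p < n - 1" using i Suc by auto
    have expand: "(\<lambda>x. f x * (innov \<sigma> \<rho> i (\<lambda>j. x j - mean_d n f j))\<^sup>2) =
       (\<lambda>x. U i x * U i x * f x - 2 * a * (U p x * U i x * f x) + a\<^sup>2 * (U p x * U p x * f x))"
      using Suc by (auto simp: innov_def U_def a_def power2_eq_square algebra_simps)
    have "cov_d n f i i - 2 * a * cov_d n f p i + a\<^sup>2 * cov_d n f p p = innov_var \<sigma> \<rho> i"
      using var[OF i] var[OF p(1)] cov_d_Suc[where \<rho> = \<rho> and p = p, OF sp var corr[OF p(2)]] i sp[OF p(1)] Suc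
      by (simp add: var_d_def a_def ar_coeff_def innov_var_def field_simps power2_eq_square)
    then show ?thesis
      unfolding expand using int[of i i] int[of p i] int[of p p] p(1) i by (simp add: cov)
  qed
  then show "integrable (Rn n) (\<lambda>x. f x * (innov \<sigma> \<rho> i (\<lambda>j. x j - mean_d n f j))\<^sup>2)"
    and "(\<integral>x. f x * (innov \<sigma> \<rho> i (\<lambda>j. x j - mean_d n f j))\<^sup>2 \<partial>Rn n) = innov_var \<sigma> \<rho> i"
    by auto
qed

theorem theorem2:
  fixes n :: nat and \<sigma> \<rho> :: "nat \<Rightarrow> real" and f :: "(nat \<Rightarrow> real) \<Rightarrow> real"
  defines "g \<equiv> gauss_dens n (markov_cov n \<sigma> \<rho>)"
  assumes n: "n \<ge> 2"
    and sigma_pos: "\<And>i. i < n \<Longrightarrow> \<sigma> i > 0"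
    and rho_bounds: "\<And>i. i < n - 1 \<Longrightarrow> \<rho> i \<in> {-1<..<1}"
    and f_meas: "f \<in> borel_measurable (Rn n)"
    and f_nonneg: "AE x in Rn n. f x \<ge> 0"
    and f_int: "integrable (Rn n) f"
    and f_total: "(\<integral>x. f x \<partial>Rn n) = 1"
    and second_moments: "\<And>i. i < n \<Longrightarrow> integrable (Rn n) (\<lambda>x. (x i)\<^sup>2 * f x)"
    and flnf_int: "integrable (Rn n) (\<lambda>x. f x * ln (f x))"
    and var: "\<And>i. i < n \<Longrightarrow> var_d n f i = (\<sigma> i)\<^sup>2"
    and corr: "\<And>i. i < n - 1 \<Longrightarrow> corr_d n f i (Suc i) = \<rho> i"
  shows "dent n f \<le> dent n g \<and>
         (dent n f = dent n g \<longleftrightarrow> (\<exists>m :: nat \<Rightarrow> real. AE x in Rn n. f x = g (\<lambda>i. x i - m i)))"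
proof -
  have d: "\<And>i. i < n \<Longrightarrow> innov_var \<sigma> \<rho> i > 0" using innov_var_pos[OF sigma_pos rho_bounds] .
  have g_shift: "g (\<lambda>i. x i - m i) = markov_density \<sigma> \<rho> n m x" for m x
    by (simp add: g_def gauss_dens_markov_cov[OF sigma_pos rho_bounds] markov_density_def)
  have "g = markov_density \<sigma> \<rho> n (\<lambda>_. 0)" using g_shift[where m = "\<lambda>_. 0"] by auto
  then have dent_g: "dent n g = dent n (markov_density \<sigma> \<rho> n m)" for m
    by (simp add: dent_markov_density[OF d])
  define \<mu> where "\<mu> = mean_d n f"
  have W: "integrable (Rn n) (\<lambda>x. f x * (innov \<sigma> \<rho> i (\<lambda>j. x j - \<mu> j))\<^sup>2)"
    "(\<integral>x. f x * (innov \<sigma> \<rho> i (\<lambda>j. x j - \<mu> j))\<^sup>2 \<partial>Rn n) = innov_var \<sigma> \<rho> i" if "i < n" for i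
    unfolding \<mu>_def using innov_second_moment[OF f_nonneg f_int second_moments sigma_pos var corr that] by auto
  have cross_int: "integrable (Rn n) (\<lambda>x. f x * ln (markov_density \<sigma> \<rho> n \<mu> x))"
    and cross: "dent n g = - (\<integral>x. f x * ln (markov_density \<sigma> \<rho> n \<mu> x) \<partial>Rn n)"
    using cross_entropy_markov_density[OF d f_int f_total W] dent_g dent_markov_density[OF d] by auto
  have mass: "(\<integral>x. markov_density \<sigma> \<rho> n \<mu> x \<partial>Rn n) = (\<integral>x. f x \<partial>Rn n)"
    using integral_markov_density[OF d] f_total by simp
  note gibbs = gibbs_inequality[where H = "markov_density \<sigma> \<rho> n \<mu>",
      OF f_nonneg f_int flnf_int markov_density_pos integrable_markov_density cross_int mass]
  show ?thesis
  proof (intro conjI iffI)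
    show "dent n f \<le> dent n g" using gibbs(1) d cross by (simp add: dent_def)
  next
    assume "dent n f = dent n g"
    then have "AE x in Rn n. f x = markov_density \<sigma> \<rho> n \<mu> x"
      using gibbs(2) d cross by (simp add: dent_def)
    then show "\<exists>m. AE x in Rn n. f x = g (\<lambda>i. x i - m i)" by (auto simp: g_shift)
  next
    assume "\<exists>m. AE x in Rn n. f x = g (\<lambda>i. x i - m i)"
    then obtain m where "AE x in Rn n. f x = markov_density \<sigma> \<rho> n m x" by (auto simp: g_shift)
    then show "dent n f = dent n g"
      using dent_cong_AE[OF f_meas borel_measurable_markov_density] dent_g by simp
  qed
qed

end
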